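(* Let $B\subseteq\mathbb{R}^n$ be a maximal lattice-free polyhedron with $m$ facets and let $c\in\operatorname{int}(B)$. Let $z_1,\dots,z_m\in\mathbb{Z}^n$ be integer points lying in the relative interiors of the $m$ distinct facets of $B$ (one in each). Then there exists $\epsilon\in(0,1)$ such that for all $i,j\in[m]$ with $i\ne j$, the segment $[z_i,z_j]$ has nonempty intersection with $(1-\epsilon)B+\epsilon c$.
   Context: A set $B\subseteq\mathbb{R}^n$ is lattice-free if it is an $n$-dimensional closed convex set with $\operatorname{int}(B)\cap\mathbb{Z}^n=\emptyset$; it is maximal lattice-free if it is not a proper subset of another lattice-free set. *)

theory Defs
  imports "HOL-Analysis.Analysis"
begin

definition integer_point :: "real ^ 'n \<Rightarrow> bool" where
  "integer_point x \<longleftrightarrow> (\<forall>i. x $ i \<in> \<int>)"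

definition lattice_free :: "(real ^ 'n) set \<Rightarrow> bool" where
  "lattice_free B \<longleftrightarrow> convex B \<and> closed B \<and> aff_dim B = int CARD('n) \<and>
     (\<forall>x \<in> interior B. \<not> integer_point x)"

definition maximal_lattice_free :: "(real ^ 'n) set \<Rightarrow> bool" where
  "maximal_lattice_free B \<longleftrightarrow> lattice_free B \<and>
     \<not> (\<exists>B'. lattice_free B' \<and> B \<subset> B')"

end

theory Submission
  imports Defs
begin

text \<open>Every interior point lies in \<open>(1 - \<epsilon>) B + \<epsilon> c\<close> for all small
  \<open>\<epsilon> > 0\<close>, and there are only finitely many pairs of facets.\<close>

lemma facet_of_eq_if_meets_rel_interior:
  fixes S :: "'a::euclidean_space set"
  assumes "convex S" "F facet_of S" "G facet_of S" "G \<inter> rel_interior F \<noteq> {}"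
  shows "F = G"
proof -
  have faces: "F face_of S" "G face_of S"
    using assms(2,3) facet_of_imp_face_of by auto
  have "F \<subseteq> G"
    using subset_of_face_of[OF faces(2) face_of_imp_subset[OF faces(1)] assms(4)] .
  then have "F face_of G"
    using face_of_subset[OF faces(1)] faces(2) face_of_imp_subset by blast
  moreover have "aff_dim F = aff_dim G"
    using assms(2,3) by (simp add: facet_of_def)
  moreover have "convex G"
    using faces(2) face_of_imp_convex by blast
  ultimately show ?thesis
    using face_of_aff_dim_lt by fastforce
qed

lemma midpoint_rel_interior_facets_in_interior:
  fixes B :: "'a::euclidean_space set"
  assumes "polyhedron B" "interior B \<noteq> {}"
    and "F facet_of B" "G facet_of B" "F \<noteq> G"
    and "x \<in> rel_interior F" "y \<in> rel_interior G"
  shows "midpoint x y \<in> interior B"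
proof (rule ccontr)
  assume not_interior: "midpoint x y \<notin> interior B"
  have "convex B"
    using assms(1) polyhedron_imp_convex by auto
  have "x \<in> B" "y \<in> B"
    using assms(3,4,6,7) rel_interior_subset facet_of_imp_subset by blast+
  have "x \<noteq> y"
    using facet_of_eq_if_meets_rel_interior[OF \<open>convex B\<close> assms(3,4)] assms(5,6,7)
      rel_interior_subset by blast
  then have mid: "midpoint x y \<in> open_segment x y"
    by simp
  have "closed_segment x y \<subseteq> B"
    using \<open>convex B\<close> \<open>x \<in> B\<close> \<open>y \<in> B\<close> by (simp add: convex_contains_segment)
  then have "midpoint x y \<in> closure B - interior B"
    using not_interior midpoint_in_closed_segment closure_subset by blast
  then have "midpoint x y \<in> rel_frontier B"
    by (simp add: rel_frontier_def rel_interior_nonempty_interior[OF assms(2)])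
  then obtain H where H: "H facet_of B" "midpoint x y \<in> H"
    using rel_frontier_of_polyhedron[OF assms(1)] by blast
  then have "x \<in> H" "y \<in> H"
    using face_ofD[OF facet_of_imp_face_of[OF H(1)] mid \<open>x \<in> B\<close> \<open>y \<in> B\<close>] by auto
  then have "F = H" "G = H"
    using facet_of_eq_if_meets_rel_interior[OF \<open>convex B\<close>] assms(3,4,6,7) H(1) by blast+
  with assms(5) show False
    by simp
qed

lemma eventually_in_shrunk_image:
  fixes B :: "'a::real_normed_vector set"
  assumes "p \<in> interior B"
  shows "eventually (\<lambda>\<epsilon>. p \<in> (\<lambda>x. (1 - \<epsilon>) *\<^sub>R x + \<epsilon> *\<^sub>R c) ` B) (at_right 0)"
proof -
  define preimage where "preimage \<epsilon> = p + (\<epsilon> / (1 - \<epsilon>)) *\<^sub>R (p - c)" for \<epsilon> :: real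
  have "(preimage \<longlongrightarrow> p + (0 / (1 - 0)) *\<^sub>R (p - c)) (at_right 0)"
    unfolding preimage_def by (intro tendsto_intros) auto
  then have "eventually (\<lambda>\<epsilon>. preimage \<epsilon> \<in> interior B) (at_right 0)"
    using assms by (intro topological_tendstoD) auto
  moreover have "eventually (\<lambda>\<epsilon>. \<epsilon> \<in> {0<..<1::real}) (at_right 0)"
    by (rule eventually_at_right_real) simp
  ultimately show ?thesis
  proof eventually_elim
    case (elim \<epsilon>)
    then have "(1 - \<epsilon>) * (\<epsilon> / (1 - \<epsilon>)) = \<epsilon>"
      by simp
    then have "(1 - \<epsilon>) *\<^sub>R preimage \<epsilon> + \<epsilon> *\<^sub>R c = p"
      by (simp add: preimage_def scaleR_add_right algebra_simps)
    moreover have "preimage \<epsilon> \<in> B"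
      using elim interior_subset by blast
    ultimately show ?case
      by (metis rev_image_eqI)
  qed
qed

theorem lemma6p1:
  fixes B :: "(real ^ 'n) set" and c :: "real ^ 'n" and m :: nat
    and f :: "nat \<Rightarrow> (real ^ 'n) set" and z :: "nat \<Rightarrow> real ^ 'n"
  assumes "polyhedron B"
    and "maximal_lattice_free B"
    and "bij_betw f {1..m} {F. F facet_of B}"
    and "c \<in> interior B"
    and "\<And>i. i \<in> {1..m} \<Longrightarrow> integer_point (z i) \<and> z i \<in> rel_interior (f i)"
  shows "\<exists>\<epsilon>::real. 0 < \<epsilon> \<and> \<epsilon> < 1 \<and>
    (\<forall>i\<in>{1..m}. \<forall>j\<in>{1..m}. i \<noteq> j \<longrightarrow>
       closed_segment (z i) (z j) \<inter> ((\<lambda>x. (1 - \<epsilon>) *\<^sub>R x + \<epsilon> *\<^sub>R c) ` B) \<noteq> {})"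
proof -
  let ?shrunk = "\<lambda>\<epsilon>. (\<lambda>x. (1 - \<epsilon>) *\<^sub>R x + \<epsilon> *\<^sub>R c) ` B"
  have facets: "f i facet_of B" if "i \<in> {1..m}" for i
    using assms(3) that bij_betwE by blast
  have midpoint_interior: "midpoint (z i) (z j) \<in> interior B"
    if "i \<in> {1..m}" "j \<in> {1..m}" "i \<noteq> j" for i j
  proof (rule midpoint_rel_interior_facets_in_interior[OF assms(1)])
    show "f i \<noteq> f j"
      using assms(3) that by (auto simp: bij_betw_def dest: inj_onD)
  qed (use assms(4,5) facets that in auto)
  have "\<forall>i\<in>{1..m}. \<forall>j\<in>{1..m}. eventually (\<lambda>\<epsilon>. i \<noteq> j \<longrightarrow>
      midpoint (z i) (z j) \<in> ?shrunk \<epsilon>) (at_right 0)"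
    using eventually_in_shrunk_image[OF midpoint_interior] by auto
  then have "eventually (\<lambda>\<epsilon>. \<forall>i\<in>{1..m}. \<forall>j\<in>{1..m}. i \<noteq> j \<longrightarrow>
      midpoint (z i) (z j) \<in> ?shrunk \<epsilon>) (at_right 0)"
    by (intro eventually_ball_finite ballI) auto
  moreover have "eventually (\<lambda>\<epsilon>. \<epsilon> \<in> {0<..<1::real}) (at_right 0)"
    by (rule eventually_at_right_real) simp
  ultimately obtain \<epsilon> where \<epsilon>: "\<epsilon> \<in> {0<..<1}"
    and midpoints: "\<forall>i\<in>{1..m}. \<forall>j\<in>{1..m}. i \<noteq> j \<longrightarrow> midpoint (z i) (z j) \<in> ?shrunk \<epsilon>"
    using eventually_happens[OF eventually_conj] trivial_limit_at_right_real by blast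
  have "closed_segment (z i) (z j) \<inter> ?shrunk \<epsilon> \<noteq> {}"
    if "i \<in> {1..m}" "j \<in> {1..m}" "i \<noteq> j" for i j
    using midpoints that midpoint_in_closed_segment by blast
  with \<epsilon> show ?thesis
    by auto
qed

end
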